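(* Let $G=(V,E)$ be a finite simple connected graph with $n=|V|$ vertices and graph distance $d$, and let $\omega\colon V\to(0,\infty)$ be a weight function with total weight $\omega=\omega(V)$. Let $\delta>0$ and $s=\frac{8\ln n}{\delta^2}$. Let $S=\{m_1,\dots,m_s\}$ be a random sample (multiset) of $s$ vertices, drawn independently with $\Pr(m_i=v)=\omega(v)/\omega$, and let $\Phi^{*}(v)=\sum_{u\in S}d(u,v)$ (sum over the multiset, with multiplicity). Let $q$ be a vertex such that for each neighbor $v\in N(q)$ it holds $\Phi^{*}(q)\le \Phi^{*}(v)+\delta s$. Then, with probability at least $1-n^{-3}$, the vertex $q$ is $\delta$-close to a median, i.e. $\Lambda(q)\le\left(\frac12+\delta\right)\omega$.
   Context: For a vertex $q$ and a vertex $v$, a vertex $u$ is consistent with the pair $(q,v)$ if $q=v=u$, or $q\neq v$ and $v$ lies on a shortest path between $u$ and $q$; $N(q,v)$ denotes the set of all vertices consistent with $(q,v)$. $N(q)$ is the set of neighbors of $q$. For $X\subseteq V$, $\omega(X)=\sum_{u\in X}\omega(u)$. Define $\Lambda(v)=\max_{u\in N(v)}\omega(N(v,u))$. A vertex $q$ is $\delta$-close to a median if $\Lambda(q)\le(\frac12+\delta)\omega(V)$. *)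

theory Defs
  imports "HOL-Probability.Probability"
begin

definition simple_graph :: "'a set \<Rightarrow> ('a \<Rightarrow> 'a \<Rightarrow> bool) \<Rightarrow> bool" where
  "simple_graph V E \<longleftrightarrow> finite V \<and> (\<forall>u v. E u v \<longrightarrow> u \<in> V \<and> v \<in> V)
     \<and> (\<forall>u v. E u v \<longrightarrow> E v u) \<and> (\<forall>u. \<not> E u u)"

definition walk :: "('a \<Rightarrow> 'a \<Rightarrow> bool) \<Rightarrow> 'a list \<Rightarrow> bool" where
  "walk E xs \<longleftrightarrow> xs \<noteq> [] \<and> (\<forall>i. Suc i < length xs \<longrightarrow> E (xs ! i) (xs ! Suc i))"

definition walk_betw :: "('a \<Rightarrow> 'a \<Rightarrow> bool) \<Rightarrow> 'a \<Rightarrow> 'a list \<Rightarrow> 'a \<Rightarrow> bool" where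
  "walk_betw E u xs v \<longleftrightarrow> walk E xs \<and> hd xs = u \<and> last xs = v"

definition connected_graph :: "'a set \<Rightarrow> ('a \<Rightarrow> 'a \<Rightarrow> bool) \<Rightarrow> bool" where
  "connected_graph V E \<longleftrightarrow> V \<noteq> {} \<and> (\<forall>u\<in>V. \<forall>v\<in>V. \<exists>xs. walk_betw E u xs v)"

definition gdist :: "('a \<Rightarrow> 'a \<Rightarrow> bool) \<Rightarrow> 'a \<Rightarrow> 'a \<Rightarrow> nat" where
  "gdist E u v = (LEAST k. \<exists>xs. walk_betw E u xs v \<and> length xs - 1 = k)"

definition on_shortest_path :: "('a \<Rightarrow> 'a \<Rightarrow> bool) \<Rightarrow> 'a \<Rightarrow> 'a \<Rightarrow> 'a \<Rightarrow> bool" where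
  "on_shortest_path E u q v \<longleftrightarrow>
     (\<exists>xs. walk_betw E u xs q \<and> length xs - 1 = gdist E u q \<and> v \<in> set xs)"

definition consistent_set :: "'a set \<Rightarrow> ('a \<Rightarrow> 'a \<Rightarrow> bool) \<Rightarrow> 'a \<Rightarrow> 'a \<Rightarrow> 'a set" where
  "consistent_set V E q v =
     {u \<in> V. (q = v \<and> v = u) \<or> (q \<noteq> v \<and> on_shortest_path E u q v)}"

definition nbrs :: "'a set \<Rightarrow> ('a \<Rightarrow> 'a \<Rightarrow> bool) \<Rightarrow> 'a \<Rightarrow> 'a set" where
  "nbrs V E q = {v \<in> V. E q v}"

definition wt :: "('a \<Rightarrow> real) \<Rightarrow> 'a set \<Rightarrow> real" where
  "wt \<omega> X = (\<Sum>u\<in>X. \<omega> u)"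

definition Lambda :: "'a set \<Rightarrow> ('a \<Rightarrow> 'a \<Rightarrow> bool) \<Rightarrow> ('a \<Rightarrow> real) \<Rightarrow> 'a \<Rightarrow> real" where
  "Lambda V E \<omega> v = Max ((\<lambda>u. wt \<omega> (consistent_set V E v u)) ` nbrs V E v)"

definition delta_close_to_median ::
  "'a set \<Rightarrow> ('a \<Rightarrow> 'a \<Rightarrow> bool) \<Rightarrow> ('a \<Rightarrow> real) \<Rightarrow> real \<Rightarrow> 'a \<Rightarrow> bool" where
  "delta_close_to_median V E \<omega> \<delta> q \<longleftrightarrow> Lambda V E \<omega> q \<le> (1/2 + \<delta>) * wt \<omega> V"

text \<open>Phi*(v) for a sample given as a list (multiset with multiplicity).\<close>

definition Phi_sample :: "('a \<Rightarrow> 'a \<Rightarrow> bool) \<Rightarrow> 'a list \<Rightarrow> 'a \<Rightarrow> real" where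
  "Phi_sample E S v = (\<Sum>u\<leftarrow>S. real (gdist E u v))"

end

theory Submission
  imports Defs
begin

text \<open>If q is not \<delta>-close to a median, some neighbour v of q has a consistent set N(q,v) of
weight more than (1/2 + \<delta>)\<omega>(V). Every sampled vertex in N(q,v) is strictly closer to v than
to q and every other one is at most one step farther, so
\<Phi>*(v) - \<Phi>*(q) \<le> s - 2 |S \<inter> N(q,v)|; the local minimality of q then forces
|S \<inter> N(q,v)| \<le> (1 + \<delta>) s / 2. This count is binomial with mean above (1/2 + \<delta>) s, so
Hoeffding's inequality bounds the probability by exp(-\<delta>^2 s / 2) \<le> n^(-4), and a union bound
over the at most n vertices q yields n^(-3).\<close>

section \<open>Walks and graph distance\<close>

lemma walk_append_adjacent: "walk E xs \<Longrightarrow> E (last xs) v \<Longrightarrow> walk E (xs @ [v])"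
  unfolding walk_def
proof (intro conjI allI impI)
  fix i
  assume xs: "xs \<noteq> [] \<and> (\<forall>i. Suc i < length xs \<longrightarrow> E (xs ! i) (xs ! Suc i))"
    and last: "E (last xs) v" and i: "Suc i < length (xs @ [v])"
  show "E ((xs @ [v]) ! i) ((xs @ [v]) ! Suc i)"
  proof (cases "Suc i < length xs")
    case True
    then show ?thesis using xs by (simp add: nth_append)
  next
    case False
    then have "i = length xs - 1" using i by simp
    then show ?thesis using xs last by (simp add: nth_append last_conv_nth)
  qed
qed simp

lemma walk_take: "walk E xs \<Longrightarrow> 0 < k \<Longrightarrow> walk E (take k xs)"
  unfolding walk_def by auto

lemma gdist_le_walk_length: "walk_betw E u xs v \<Longrightarrow> gdist E u v \<le> length xs - 1"
  unfolding gdist_def by (rule Least_le) blast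

lemma shortest_walk_exists:
  "walk_betw E u xs v \<Longrightarrow> \<exists>ys. walk_betw E u ys v \<and> length ys - 1 = gdist E u v"
  unfolding gdist_def by (rule LeastI_ex) blast

text \<open>The walk from u to q is needed: without one, gdist E u q is the junk value LEAST of an
empty set.\<close>

lemma gdist_adjacent_le:
  assumes "walk_betw E u xs q" and "E q v"
  shows "gdist E u v \<le> gdist E u q + 1"
proof -
  obtain ys where ys: "walk_betw E u ys q" "length ys - 1 = gdist E u q"
    using shortest_walk_exists[OF assms(1)] by blast
  have "walk_betw E u (ys @ [v]) v"
    using ys assms(2) walk_append_adjacent[of E ys v] unfolding walk_betw_def by (auto simp: walk_def)
  then have "gdist E u v \<le> length ys"
    using gdist_le_walk_length by fastforce
  then show ?thesis using ys by simp
qed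

lemma gdist_on_shortest_path_less:
  assumes "on_shortest_path E u q v" and "v \<noteq> q"
  shows "gdist E u v < gdist E u q"
proof -
  obtain xs where xs: "walk_betw E u xs q" "length xs - 1 = gdist E u q" "v \<in> set xs"
    using assms(1) unfolding on_shortest_path_def by blast
  obtain i where i: "i < length xs" "xs ! i = v"
    using xs(3) by (meson in_set_conv_nth)
  have "xs \<noteq> []" "last xs = q"
    using xs(1) unfolding walk_betw_def walk_def by auto
  then have "xs ! (length xs - 1) = q"
    by (simp add: last_conv_nth)
  then have "i < length xs - 1"
    using i assms(2) by (cases "i = length xs - 1") auto
  moreover have "walk_betw E u (take (Suc i) xs) v"
  proof -
    have "walk E (take (Suc i) xs)" and "hd (take (Suc i) xs) = u"
      using xs(1) walk_take unfolding walk_betw_def by auto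
    moreover have "last (take (Suc i) xs) = v"
      using i by (simp add: take_Suc_conv_app_nth)
    ultimately show ?thesis
      unfolding walk_betw_def by blast
  qed
  then have "gdist E u v \<le> i"
    using gdist_le_walk_length i(1) by (metis diff_Suc_1 length_take min.absorb2 Suc_leI)
  ultimately show ?thesis using xs(2) by simp
qed

lemma walk_betw_second_vertex_adjacent:
  assumes "walk_betw E u xs w" and "u \<noteq> w"
  shows "E u (xs ! 1)"
proof -
  have xs: "xs \<noteq> []" "hd xs = u" "last xs = w"
    and steps: "\<forall>i. Suc i < length xs \<longrightarrow> E (xs ! i) (xs ! Suc i)"
    using assms(1) unfolding walk_betw_def walk_def by auto
  obtain x ys where xs_Cons: "xs = x # ys"
    using xs(1) by (cases xs) auto
  then have "ys \<noteq> []"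
    using xs assms(2) by auto
  then have "Suc 0 < length xs"
    using xs_Cons by simp
  then have "E (xs ! 0) (xs ! 1)"
    using steps by simp
  then show ?thesis
    using xs by (simp add: hd_conv_nth)
qed

lemma nbrs_nonempty:
  assumes "simple_graph V E" and "connected_graph V E" and "2 \<le> card V" and "q \<in> V"
  shows "nbrs V E q \<noteq> {}"
proof -
  have "\<not> V \<subseteq> {q}"
  proof
    assume "V \<subseteq> {q}"
    then have "card V \<le> card {q}"
      using card_mono[of "{q}" V] by simp
    then show False
      using assms(3) by simp
  qed
  then obtain w where "w \<in> V" "w \<noteq> q"
    by blast
  moreover obtain xs where "walk_betw E q xs w"
    using assms(2,4) \<open>w \<in> V\<close> unfolding connected_graph_def by blast
  ultimately have "E q (xs ! 1)"
    using walk_betw_second_vertex_adjacent[of E q xs w] by auto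
  then have "xs ! 1 \<in> nbrs V E q"
    using assms(1) unfolding simple_graph_def nbrs_def by blast
  then show ?thesis by blast
qed

section \<open>Local minima of the sampled distance sum\<close>

definition hits :: "'a set \<Rightarrow> 'a list \<Rightarrow> nat" where
  "hits A xs = length (filter (\<lambda>x. x \<in> A) xs)"

lemma Phi_sample_diff_le:
  assumes "\<forall>u\<in>set S. real (gdist E u v) - real (gdist E u q) \<le> (if u \<in> A then -1 else 1)"
  shows "Phi_sample E S v - Phi_sample E S q \<le> real (length S) - 2 * real (hits A S)"
  using assms by (induction S) (auto simp: Phi_sample_def hits_def)

lemma local_minimum_few_consistent_hits:
  assumes G: "simple_graph V E" and conn: "connected_graph V E"
    and S: "set S \<subseteq> V" and q: "q \<in> V" and qv: "E q v"
    and min: "Phi_sample E S q \<le> Phi_sample E S v + \<delta> * real (length S)"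
  shows "real (hits (consistent_set V E q v) S) \<le> (1 + \<delta>) * real (length S) / 2"
proof -
  have "v \<noteq> q"
    using G qv unfolding simple_graph_def by blast
  have "real (gdist E u v) - real (gdist E u q) \<le> (if u \<in> consistent_set V E q v then -1 else 1)"
    if "u \<in> set S" for u
  proof -
    obtain xs where "walk_betw E u xs q"
      using conn S q \<open>u \<in> set S\<close> unfolding connected_graph_def by blast
    then have "gdist E u v \<le> gdist E u q + 1"
      using qv by (rule gdist_adjacent_le)
    moreover have "gdist E u v < gdist E u q" if "u \<in> consistent_set V E q v"
      using that \<open>v \<noteq> q\<close> gdist_on_shortest_path_less unfolding consistent_set_def by auto
    ultimately show ?thesis by auto
  qed
  then have "Phi_sample E S v - Phi_sample E S q
      \<le> real (length S) - 2 * real (hits (consistent_set V E q v) S)"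
    by (intro Phi_sample_diff_le) blast
  then show ?thesis
    using min by (simp add: field_simps)
qed

definition heavy_nbr :: "'a set \<Rightarrow> ('a \<Rightarrow> 'a \<Rightarrow> bool) \<Rightarrow> ('a \<Rightarrow> real) \<Rightarrow> real \<Rightarrow> 'a \<Rightarrow> 'a" where
  "heavy_nbr V E \<omega> \<delta> q =
     (SOME v. v \<in> nbrs V E q \<and> wt \<omega> (consistent_set V E q v) > (1/2 + \<delta>) * wt \<omega> V)"

lemma heavy_nbr:
  assumes "finite V" and "nbrs V E q \<noteq> {}" and "\<not> delta_close_to_median V E \<omega> \<delta> q"
  shows "heavy_nbr V E \<omega> \<delta> q \<in> nbrs V E q"
    and "wt \<omega> (consistent_set V E q (heavy_nbr V E \<omega> \<delta> q)) > (1/2 + \<delta>) * wt \<omega> V"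
proof -
  have "finite (nbrs V E q)"
    using assms(1) unfolding nbrs_def by simp
  then have "Lambda V E \<omega> q \<in> (\<lambda>v. wt \<omega> (consistent_set V E q v)) ` nbrs V E q"
    unfolding Lambda_def using assms(2) by (intro Max_in) auto
  moreover have "Lambda V E \<omega> q > (1/2 + \<delta>) * wt \<omega> V"
    using assms(3) unfolding delta_close_to_median_def by simp
  ultimately have "\<exists>v. v \<in> nbrs V E q \<and> wt \<omega> (consistent_set V E q v) > (1/2 + \<delta>) * wt \<omega> V"
    by auto
  from someI_ex[OF this] show "heavy_nbr V E \<omega> \<delta> q \<in> nbrs V E q"
    and "wt \<omega> (consistent_set V E q (heavy_nbr V E \<omega> \<delta> q)) > (1/2 + \<delta>) * wt \<omega> V"
    unfolding heavy_nbr_def by blast+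
qed

lemma unsuccessful_samples_few_heavy_hits:
  assumes G: "simple_graph V E" and conn: "connected_graph V E" and V: "2 \<le> card V"
    and P: "set_pmf P \<subseteq> V"
  shows "set_pmf (replicate_pmf s P) -
           {S. \<forall>q\<in>V. (\<forall>v\<in>nbrs V E q. Phi_sample E S q \<le> Phi_sample E S v + \<delta> * real s)
                 \<longrightarrow> delta_close_to_median V E \<omega> \<delta> q}
         \<subseteq> (\<Union>q\<in>{q\<in>V. \<not> delta_close_to_median V E \<omega> \<delta> q}.
               {S. real (hits (consistent_set V E q (heavy_nbr V E \<omega> \<delta> q)) S) \<le> (1 + \<delta>) * real s / 2})"
proof
  fix S
  assume unsuccessful: "S \<in> set_pmf (replicate_pmf s P) -
           {S. \<forall>q\<in>V. (\<forall>v\<in>nbrs V E q. Phi_sample E S q \<le> Phi_sample E S v + \<delta> * real s)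
                 \<longrightarrow> delta_close_to_median V E \<omega> \<delta> q}"
  then have S: "set S \<subseteq> V" "length S = s"
    using P by (auto simp: set_replicate_pmf)
  obtain q where q: "q \<in> V" and far: "\<not> delta_close_to_median V E \<omega> \<delta> q"
    and min: "\<forall>v\<in>nbrs V E q. Phi_sample E S q \<le> Phi_sample E S v + \<delta> * real (length S)"
    using unsuccessful S(2) by blast
  have "heavy_nbr V E \<omega> \<delta> q \<in> nbrs V E q"
    using G conn V q far by (intro heavy_nbr nbrs_nonempty) (auto simp: simple_graph_def)
  then have "real (hits (consistent_set V E q (heavy_nbr V E \<omega> \<delta> q)) S) \<le> (1 + \<delta>) * real (length S) / 2"
    using local_minimum_few_consistent_hits[OF G conn S(1) q] min unfolding nbrs_def by blast
  then show "S \<in> (\<Union>q\<in>{q\<in>V. \<not> delta_close_to_median V E \<omega> \<delta> q}.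
               {S. real (hits (consistent_set V E q (heavy_nbr V E \<omega> \<delta> q)) S) \<le> (1 + \<delta>) * real s / 2})"
    using q far S(2) by blast
qed

section \<open>Sampling\<close>

lemma replicate_pmf_map_pmf: "replicate_pmf n (map_pmf f p) = map_pmf (map f) (replicate_pmf n p)"
  by (induction n) (simp_all add: map_pmf_def bind_assoc_pmf bind_return_pmf)

lemma map_pmf_in_set_eq_bernoulli: "map_pmf (\<lambda>x. x \<in> A) p = bernoulli_pmf (measure_pmf.prob p A)"
proof (rule pmf_eqI)
  fix b :: bool
  have "measure_pmf.prob p (- A) = 1 - measure_pmf.prob p A"
    using measure_pmf.prob_compl[of A p] by (simp add: Compl_eq_Diff_UNIV)
  then show "pmf (map_pmf (\<lambda>x. x \<in> A) p) b = pmf (bernoulli_pmf (measure_pmf.prob p A)) b"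
    by (cases b) (simp_all add: pmf_map vimage_def Compl_eq)
qed

lemma hits_replicate_pmf_binomial:
  "map_pmf (hits A) (replicate_pmf n p) = binomial_pmf n (measure_pmf.prob p A)"
proof -
  have "binomial_pmf n (measure_pmf.prob p A) =
      map_pmf (length \<circ> filter id) (replicate_pmf n (map_pmf (\<lambda>x. x \<in> A) p))"
    by (subst binomial_pmf_altdef) (simp_all add: map_pmf_in_set_eq_bernoulli)
  then show ?thesis
    by (simp add: replicate_pmf_map_pmf pmf.map_comp o_def filter_map hits_def[abs_def])
qed

lemma hits_replicate_pmf_lower_tail:
  assumes p: "measure_pmf.prob p A > 1/2 + \<delta>" and \<delta>: "\<delta> > 0" and n: "n > 0"
  shows "measure_pmf.prob (replicate_pmf n p) {xs. real (hits A xs) \<le> (1 + \<delta>) * real n / 2}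
           \<le> exp (- (\<delta>\<^sup>2 * real n / 2))"
proof -
  define \<pi> where "\<pi> = measure_pmf.prob p A"
  define \<epsilon> where "\<epsilon> = real n * \<pi> - (1 + \<delta>) * real n / 2"
  have "real n * (\<delta> / 2) \<le> real n * (\<pi> - 1/2 - \<delta>/2)"
    using p unfolding \<pi>_def by (intro mult_left_mono) auto
  then have \<epsilon>: "\<delta> * real n / 2 \<le> \<epsilon>"
    unfolding \<epsilon>_def by (simp add: algebra_simps add_divide_distrib)
  have "0 \<le> \<delta> * real n / 2"
    using \<delta> by simp
  have "binomial_distribution \<pi>"
    unfolding binomial_distribution_def \<pi>_def by simp
  have "measure_pmf.prob (replicate_pmf n p) {xs. real (hits A xs) \<le> (1 + \<delta>) * real n / 2}
      = measure_pmf.prob (binomial_pmf n \<pi>) {k. real k \<le> real n * \<pi> - \<epsilon>}"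
    by (simp add: hits_replicate_pmf_binomial[symmetric] \<epsilon>_def \<pi>_def vimage_def)
  also have "\<dots> \<le> exp (- 2 * \<epsilon>\<^sup>2 / real n)"
    using \<epsilon> \<open>0 \<le> \<delta> * real n / 2\<close>
    by (intro binomial_distribution.prob_le[OF \<open>binomial_distribution \<pi>\<close> n]) linarith
  also have "\<dots> \<le> exp (- 2 * (\<delta> * real n / 2)\<^sup>2 / real n)"
    using \<epsilon> \<open>0 \<le> \<delta> * real n / 2\<close> n by (simp add: divide_right_mono power_mono)
  also have "\<dots> = exp (- (\<delta>\<^sup>2 * real n / 2))"
    using n by (simp add: power2_eq_square field_simps)
  finally show ?thesis .
qed

lemma exp_sample_size_le_powr:
  assumes "c > 0" and "\<delta> > 0" and "8 * ln c / \<delta>\<^sup>2 \<le> real s"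
  shows "exp (- (\<delta>\<^sup>2 * real s / 2)) \<le> c powr (-4)"
proof -
  have "8 * ln c \<le> real s * \<delta>\<^sup>2"
    using assms(2,3) by (simp add: divide_le_eq)
  then have "exp (- (\<delta>\<^sup>2 * real s / 2)) \<le> exp (- 4 * ln c)"
    by (simp add: algebra_simps)
  also have "\<dots> = c powr (-4)"
    using assms(1) by (simp add: powr_def)
  finally show ?thesis .
qed

lemma weighted_pmf_prob:
  assumes "finite V" and "\<forall>v\<in>V. pmf P v = \<omega> v / wt \<omega> V" and "X \<subseteq> V"
  shows "measure_pmf.prob P X = wt \<omega> X / wt \<omega> V"
proof -
  have "finite X"
    using assms(1,3) by (rule finite_subset[rotated])
  then have "measure_pmf.prob P X = (\<Sum>u\<in>X. \<omega> u / wt \<omega> V)"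
    using assms(2,3) by (auto simp: measure_measure_pmf_finite intro!: sum.cong)
  then show ?thesis
    unfolding wt_def by (simp add: sum_divide_distrib)
qed

lemma weighted_pmf_support:
  assumes "finite V" and "wt \<omega> V \<noteq> 0" and "\<forall>v\<in>V. pmf P v = \<omega> v / wt \<omega> V"
  shows "set_pmf P \<subseteq> V"
proof -
  have "measure_pmf.prob P V = 1"
    using weighted_pmf_prob[OF assms(1,3)] assms(2) by simp
  then have "AE x in measure_pmf P. x \<in> V"
    by (subst (asm) measure_pmf.prob_eq_1) auto
  then show ?thesis
    by (auto simp: AE_measure_pmf_iff)
qed

lemma weighted_sample_few_hits_prob_le:
  assumes "finite V" and "\<forall>v\<in>V. pmf P v = \<omega> v / wt \<omega> V" and W: "wt \<omega> V > 0"
    and "X \<subseteq> V" and heavy: "wt \<omega> X > (1/2 + \<delta>) * wt \<omega> V" and "\<delta> > 0" and "s > 0"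
  shows "measure_pmf.prob (replicate_pmf s P) {S. real (hits X S) \<le> (1 + \<delta>) * real s / 2}
           \<le> exp (- (\<delta>\<^sup>2 * real s / 2))"
proof (rule hits_replicate_pmf_lower_tail)
  have "measure_pmf.prob P X = wt \<omega> X / wt \<omega> V"
    using assms(1,2,4) by (rule weighted_pmf_prob)
  then show "measure_pmf.prob P X > 1/2 + \<delta>"
    using heavy W by (simp add: pos_less_divide_eq)
qed fact+

lemma far_vertex_few_heavy_hits_prob_le:
  assumes G: "simple_graph V E" and conn: "connected_graph V E" and V: "2 \<le> card V"
    and W: "wt \<omega> V > 0" and P: "\<forall>v\<in>V. pmf P v = \<omega> v / wt \<omega> V"
    and q: "q \<in> V" and far: "\<not> delta_close_to_median V E \<omega> \<delta> q" and "\<delta> > 0" and "s > 0"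
  shows "measure_pmf.prob (replicate_pmf s P)
           {S. real (hits (consistent_set V E q (heavy_nbr V E \<omega> \<delta> q)) S) \<le> (1 + \<delta>) * real s / 2}
         \<le> exp (- (\<delta>\<^sup>2 * real s / 2))"
proof (rule weighted_sample_few_hits_prob_le[OF _ P W])
  show "finite V"
    using G unfolding simple_graph_def by blast
  then show "wt \<omega> (consistent_set V E q (heavy_nbr V E \<omega> \<delta> q)) > (1/2 + \<delta>) * wt \<omega> V"
    using nbrs_nonempty[OF G conn V q] far by (rule heavy_nbr(2))
qed (auto simp: consistent_set_def assms)

lemma prob_ge_by_union_bound:
  assumes "finite I" and "\<And>i. i \<in> I \<Longrightarrow> measure_pmf.prob R (B i) \<le> c"
    and "set_pmf R - A \<subseteq> (\<Union>i\<in>I. B i)"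
  shows "1 - real (card I) * c \<le> measure_pmf.prob R A"
proof -
  have "measure_pmf.prob R (- A) = measure_pmf.prob R (set_pmf R - A)"
    by (metis Diff_eq measure_Int_set_pmf inf_commute)
  also have "\<dots> \<le> measure_pmf.prob R (\<Union>i\<in>I. B i)"
    using assms(3) by (intro measure_pmf.finite_measure_mono) auto
  also have "\<dots> \<le> (\<Sum>i\<in>I. measure_pmf.prob R (B i))"
    using assms(1) by (intro measure_pmf.finite_measure_subadditive_finite) auto
  also have "\<dots> \<le> real (card I) * c"
    using sum_mono[of I _ "\<lambda>_. c"] assms(2) by simp
  finally show ?thesis
    using measure_pmf.prob_compl[of A R] by (simp add: Compl_eq_Diff_UNIV)
qed

theorem theorem4:
  fixes V :: "'a set" and E :: "'a \<Rightarrow> 'a \<Rightarrow> bool" and \<omega> :: "'a \<Rightarrow> real"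
    and \<delta> :: real and P :: "'a pmf" and s :: nat
  assumes G: "simple_graph V E" and conn: "connected_graph V E"
    and wpos: "\<forall>v\<in>V. \<omega> v > 0"
    and dpos: "\<delta> > 0"
    and s_def: "s = nat \<lceil>8 * ln (real (card V)) / \<delta>\<^sup>2\<rceil>"
    and P_def: "\<forall>v\<in>V. pmf P v = \<omega> v / wt \<omega> V"
  shows "measure_pmf.prob (replicate_pmf s P)
           {S. \<forall>q\<in>V. (\<forall>v\<in>nbrs V E q. Phi_sample E S q \<le> Phi_sample E S v + \<delta> * real s)
                 \<longrightarrow> delta_close_to_median V E \<omega> \<delta> q}
         \<ge> 1 - real (card V) powr (-3)"
proof -
  define n where "n = card V"
  have finV: "finite V" and "V \<noteq> {}"
    using G conn unfolding simple_graph_def connected_graph_def by auto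
  then have W: "wt \<omega> V > 0"
    unfolding wt_def using wpos by (intro sum_pos) auto
  have "n \<ge> 1"
    using finV \<open>V \<noteq> {}\<close> unfolding n_def by (simp add: Suc_le_eq card_gt_0_iff)
  then consider "n = 1" | "n \<ge> 2"
    by linarith
  then show ?thesis
  proof cases
    case 1
    then show ?thesis by (simp add: n_def)
  next
    case 2
    have s: "8 * ln (real n) / \<delta>\<^sup>2 \<le> real s"
      unfolding s_def n_def by (rule real_nat_ceiling_ge)
    moreover have "0 < 8 * ln (real n) / \<delta>\<^sup>2"
      using 2 dpos by simp
    ultimately have "s > 0" by linarith
    have V: "2 \<le> card V"
      using 2 unfolding n_def .
    define Bad where "Bad = {q\<in>V. \<not> delta_close_to_median V E \<omega> \<delta> q}"
    have "1 - real (card Bad) * real n powr (-4) \<le> measure_pmf.prob (replicate_pmf s P)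
           {S. \<forall>q\<in>V. (\<forall>v\<in>nbrs V E q. Phi_sample E S q \<le> Phi_sample E S v + \<delta> * real s)
                 \<longrightarrow> delta_close_to_median V E \<omega> \<delta> q}"
      unfolding Bad_def
    proof (rule prob_ge_by_union_bound[OF _ _ unsuccessful_samples_few_heavy_hits[OF G conn]])
      show "set_pmf P \<subseteq> V"
        using weighted_pmf_support[OF finV _ P_def] W by simp
      show "measure_pmf.prob (replicate_pmf s P)
              {S. real (hits (consistent_set V E q (heavy_nbr V E \<omega> \<delta> q)) S) \<le> (1 + \<delta>) * real s / 2}
            \<le> real n powr (-4)" if "q \<in> {q\<in>V. \<not> delta_close_to_median V E \<omega> \<delta> q}" for q
      proof -
        have "q \<in> V" and "\<not> delta_close_to_median V E \<omega> \<delta> q"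
          using that by auto
        note far_vertex_few_heavy_hits_prob_le[OF G conn V W P_def this dpos \<open>s > 0\<close>]
        also have "exp (- (\<delta>\<^sup>2 * real s / 2)) \<le> real n powr (-4)"
          using 2 by (intro exp_sample_size_le_powr[OF _ dpos s]) simp
        finally show ?thesis .
      qed
      show "finite {q\<in>V. \<not> delta_close_to_median V E \<omega> \<delta> q}"
        using finV by simp
    qed (fact V)
    moreover have "real (card Bad) * real n powr (-4) \<le> real n * real n powr (-4)"
      using finV unfolding Bad_def n_def by (intro mult_right_mono) (auto intro: card_mono)
    moreover have "real n * real n powr (-4) = real n powr (-3)"
      by (simp add: powr_mult_base)
    ultimately show ?thesis
      unfolding n_def by linarith
  qed
qed

end
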